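(* Let $\Omega$ be a metric space, $E$ a non-trivial locally convex Hausdorff space over $\mathbb{K}$ and $\mathcal{FV}(\Omega)$ a dom-space such that $\mathcal{FV}(\Omega)\subset\mathcal{CC}(\Omega)$ as a linear subspace. If the map $\delta\colon\Omega\to\mathcal{FV}(\Omega)'_\kappa$, $x\mapsto\delta_x$, is Cauchy continuous, then $S(u)\in\mathcal{CC}(\Omega,E)$ for all $u\in\mathcal{FV}(\Omega)\varepsilon E$.
   Context: $\mathbb{K}\in\{\mathbb{R},\mathbb{C}\}$. A map from a metric space into a metric space or a locally convex space is Cauchy continuous if it maps Cauchy sequences to Cauchy sequences; $\mathcal{CC}(\Omega,E)$ denotes the Cauchy continuous maps $\Omega\to E$, $\mathcal{CC}(\Omega):=\mathcal{CC}(\Omega,\mathbb{K})$. Framework: $J,M$ non-empty index sets, $(\omega_m)_{m\in M}$ non-empty sets, $\nu_{j,m}\colon\omega_m\to[0,\infty)$ such that for all $m$, $x\in\omega_m$ some $\nu_{j,m}(x)>0$; $\operatorname{AP}(\Omega)\subset\mathbb{K}^\Omega$ a linear subspace; $T_m\colon\operatorname{dom}T_m\to\mathbb{K}^{\omega_m}$ linear maps on linear subspaces of $\mathbb{K}^\Omega$; $\mathcal{FV}(\Omega):=\{f\in\operatorname{AP}(\Omega)\cap\bigcap_m\operatorname{dom}T_m: |f|_{j,m}:=\sup_{x\in\omega_m}|T_m(f)(x)|\nu_{j,m}(x)<\infty\ \forall j,m\}$ with these seminorms. It is a dom-space if it is Hausdorff, the seminorms are directed and every $\delta_x\colon f\mapsto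 f(x)$ belongs to $\mathcal{FV}(\Omega)'$. $\mathcal{FV}(\Omega)'_\kappa$: dual with the topology of uniform convergence on absolutely convex compact subsets of $\mathcal{FV}(\Omega)$. $\mathcal{FV}(\Omega)\varepsilon E$: continuous linear maps $\mathcal{FV}(\Omega)'_\kappa\to E$ with the topology of uniform convergence on equicontinuous sets; $S(u)(x):=u(\delta_x)$. *)

theory Defs
  imports "HOL-Analysis.Analysis"
begin

definition lin_subspace :: "('a \<Rightarrow> 'k::real_normed_field) set \<Rightarrow> bool" where
  "lin_subspace S \<longleftrightarrow> (\<lambda>x. 0) \<in> S \<and> (\<forall>f\<in>S. \<forall>g\<in>S. (\<lambda>x. f x + g x) \<in> S)
     \<and> (\<forall>c. \<forall>f\<in>S. (\<lambda>x. c * f x) \<in> S)"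

definition lin_map_on :: "('a \<Rightarrow> 'k::real_normed_field) set \<Rightarrow> (('a \<Rightarrow> 'k) \<Rightarrow> ('w \<Rightarrow> 'k)) \<Rightarrow> bool" where
  "lin_map_on S T \<longleftrightarrow> (\<forall>f\<in>S. \<forall>g\<in>S. T (\<lambda>x. f x + g x) = (\<lambda>w. T f w + T g w))
     \<and> (\<forall>c. \<forall>f\<in>S. T (\<lambda>x. c * f x) = (\<lambda>w. c * T f w))"

definition FV :: "('a \<Rightarrow> 'k::real_normed_field) set \<Rightarrow> ('m \<Rightarrow> ('a \<Rightarrow> 'k) set)
    \<Rightarrow> ('m \<Rightarrow> ('a \<Rightarrow> 'k) \<Rightarrow> 'w \<Rightarrow> 'k) \<Rightarrow> ('m \<Rightarrow> 'w set) \<Rightarrow> ('j \<Rightarrow> 'm \<Rightarrow> 'w \<Rightarrow> real)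
    \<Rightarrow> ('a \<Rightarrow> 'k) set" where
  "FV AP domT T \<omega> \<nu> = {f. f \<in> AP \<and> (\<forall>m. f \<in> domT m)
      \<and> (\<forall>j m. bdd_above ((\<lambda>x. norm (T m f x) * \<nu> j m x) ` \<omega> m))}"

definition fv_seminorm :: "('m \<Rightarrow> ('a \<Rightarrow> 'k::real_normed_field) \<Rightarrow> 'w \<Rightarrow> 'k) \<Rightarrow> ('m \<Rightarrow> 'w set)
    \<Rightarrow> ('j \<Rightarrow> 'm \<Rightarrow> 'w \<Rightarrow> real) \<Rightarrow> 'j \<Rightarrow> 'm \<Rightarrow> ('a \<Rightarrow> 'k) \<Rightarrow> real" where
  "fv_seminorm T \<omega> \<nu> j m f = (SUP x\<in>\<omega> m. norm (T m f x) * \<nu> j m x)"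

definition fv_seminorms :: "('m \<Rightarrow> ('a \<Rightarrow> 'k::real_normed_field) \<Rightarrow> 'w \<Rightarrow> 'k) \<Rightarrow> ('m \<Rightarrow> 'w set)
    \<Rightarrow> ('j \<Rightarrow> 'm \<Rightarrow> 'w \<Rightarrow> real) \<Rightarrow> (('a \<Rightarrow> 'k) \<Rightarrow> real) set" where
  "fv_seminorms T \<omega> \<nu> = {fv_seminorm T \<omega> \<nu> j m | j m. True}"

text \<open>Continuity of a linear map between spaces whose topologies are generated by families
  of seminorms P (on the domain X) and Q (on the codomain).\<close>

definition sn_cont :: "'x set \<Rightarrow> ('x \<Rightarrow> real) set \<Rightarrow> ('y \<Rightarrow> real) set \<Rightarrow> ('x \<Rightarrow> 'y) \<Rightarrow> bool" where
  "sn_cont X P Q u \<longleftrightarrow> (\<forall>q\<in>Q. \<exists>F C. finite F \<and> F \<subseteq> P \<and> C \<ge> 0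
      \<and> (\<forall>y\<in>X. q (u y) \<le> C * (\<Sum>p\<in>F. p y)))"

definition fun_sn_topology :: "('x \<Rightarrow> 'k::real_normed_field) set \<Rightarrow> (('x \<Rightarrow> 'k) \<Rightarrow> real) set
    \<Rightarrow> ('x \<Rightarrow> 'k) topology" where
  "fun_sn_topology X Q = topology_generated_by
     {{g \<in> X. q (\<lambda>x. g x - f x) < e} | q f e. q \<in> Q \<and> f \<in> X \<and> e > 0}"

definition abs_convex :: "('x \<Rightarrow> 'k::real_normed_field) set \<Rightarrow> bool" where
  "abs_convex K \<longleftrightarrow> (\<forall>f\<in>K. \<forall>g\<in>K. \<forall>a b. norm a + norm b \<le> 1 \<longrightarrow> (\<lambda>x. a * f x + b * g x) \<in> K)"

definition fun_sn_Cauchy :: "(('x \<Rightarrow> 'k::real_normed_field) \<Rightarrow> real) set \<Rightarrow> (nat \<Rightarrow> 'x \<Rightarrow> 'k) \<Rightarrow> bool" where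
  "fun_sn_Cauchy Q Y \<longleftrightarrow> (\<forall>q\<in>Q. \<forall>e>0. \<exists>N. \<forall>m\<ge>N. \<forall>n\<ge>N. q (\<lambda>x. Y m x - Y n x) < e)"

text \<open>Dual space FV(Omega)' (functionals extended by zero outside FV(Omega)).\<close>

definition fv_dual :: "('a \<Rightarrow> 'k::real_normed_field) set \<Rightarrow> (('a \<Rightarrow> 'k) \<Rightarrow> real) set
    \<Rightarrow> (('a \<Rightarrow> 'k) \<Rightarrow> 'k) set" where
  "fv_dual X Q = {y. (\<forall>f. f \<notin> X \<longrightarrow> y f = 0)
      \<and> (\<forall>f\<in>X. \<forall>g\<in>X. y (\<lambda>x. f x + g x) = y f + y g)
      \<and> (\<forall>c. \<forall>f\<in>X. y (\<lambda>x. c * f x) = c * y f)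
      \<and> sn_cont X Q {norm} y}"

definition kappa_seminorms :: "('a \<Rightarrow> 'k::real_normed_field) set \<Rightarrow> (('a \<Rightarrow> 'k) \<Rightarrow> real) set
    \<Rightarrow> ((('a \<Rightarrow> 'k) \<Rightarrow> 'k) \<Rightarrow> real) set" where
  "kappa_seminorms X Q = {(\<lambda>y. Sup (insert 0 ((\<lambda>f. norm (y f)) ` K))) | K.
      K \<subseteq> X \<and> abs_convex K \<and> compactin (fun_sn_topology X Q) K}"

definition point_eval :: "('a \<Rightarrow> 'k::real_normed_field) set \<Rightarrow> 'a \<Rightarrow> ('a \<Rightarrow> 'k) \<Rightarrow> 'k" where
  "point_eval X x = (\<lambda>f. if f \<in> X then f x else 0)"

text \<open>Locally convex Hausdorff space E over K: a K-module with a separating family of seminorms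
  generating its topology.\<close>

definition lcHs :: "('k::real_normed_field \<Rightarrow> 'e::ab_group_add \<Rightarrow> 'e) \<Rightarrow> ('e \<Rightarrow> real) set \<Rightarrow> bool" where
  "lcHs sm P \<longleftrightarrow> module sm
     \<and> (\<forall>p\<in>P. \<forall>x y. p (x + y) \<le> p x + p y)
     \<and> (\<forall>p\<in>P. \<forall>c x. p (sm c x) = norm c * p x)
     \<and> (\<forall>x. x \<noteq> 0 \<longrightarrow> (\<exists>p\<in>P. p x \<noteq> 0))"

definition sn_Cauchy :: "('e::ab_group_add \<Rightarrow> real) set \<Rightarrow> (nat \<Rightarrow> 'e) \<Rightarrow> bool" where
  "sn_Cauchy P X \<longleftrightarrow> (\<forall>p\<in>P. \<forall>e>0. \<exists>N. \<forall>m\<ge>N. \<forall>n\<ge>N. p (X m - X n) < e)"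

end

theory Submission
  imports Defs
begin

text \<open>The map \<open>S(u)\<close> is the composition \<open>u \<circ> \<delta>\<close>. A Cauchy sequence \<open>x\<^sub>n\<close> in \<open>\<Omega>\<close> gives a
  Cauchy sequence \<open>\<delta>\<^sub>x\<^sub>n\<close> in \<open>FV(\<Omega>)'\<^sub>\<kappa>\<close>, and a continuous linear map \<open>u\<close> is dominated by
  finitely many of the \<open>\<kappa>\<close>-seminorms, so by additivity every seminorm of \<open>u(\<delta>\<^sub>x\<^sub>m) - u(\<delta>\<^sub>x\<^sub>n)\<close>
  is controlled by finitely many seminorms of \<open>\<delta>\<^sub>x\<^sub>m - \<delta>\<^sub>x\<^sub>n\<close>.\<close>

lemma fv_seminorm_nonneg:
  assumes "\<omega> m \<noteq> {}" and "\<And>x. \<nu> j m x \<ge> 0" and "f \<in> FV AP domT T \<omega> \<nu>"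
  shows "fv_seminorm T \<omega> \<nu> j m f \<ge> 0"
proof -
  obtain x where x: "x \<in> \<omega> m" using assms(1) by blast
  have bdd: "bdd_above ((\<lambda>x. norm (T m f x) * \<nu> j m x) ` \<omega> m)"
    using assms(3) unfolding FV_def by auto
  have "0 \<le> norm (T m f x) * \<nu> j m x" using assms(2) by simp
  also have "\<dots> \<le> fv_seminorm T \<omega> \<nu> j m f"
    unfolding fv_seminorm_def by (rule cSUP_upper[OF x bdd])
  finally show ?thesis .
qed

lemma sn_cont_diff:
  fixes y1 y2 :: "'x \<Rightarrow> 'v::real_normed_vector"
  assumes nonneg: "\<And>q f. q \<in> Q \<Longrightarrow> f \<in> X \<Longrightarrow> q f \<ge> 0"
    and y1: "sn_cont X Q {norm} y1" and y2: "sn_cont X Q {norm} y2"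
  shows "sn_cont X Q {norm} (\<lambda>f. y1 f - y2 f)"
proof -
  obtain F1 C1 where F1: "finite F1" "F1 \<subseteq> Q" "C1 \<ge> 0"
    and bound1: "\<And>f. f \<in> X \<Longrightarrow> norm (y1 f) \<le> C1 * (\<Sum>p\<in>F1. p f)"
    using y1 unfolding sn_cont_def by auto
  obtain F2 C2 where F2: "finite F2" "F2 \<subseteq> Q" "C2 \<ge> 0"
    and bound2: "\<And>f. f \<in> X \<Longrightarrow> norm (y2 f) \<le> C2 * (\<Sum>p\<in>F2. p f)"
    using y2 unfolding sn_cont_def by auto
  have "norm (y1 f - y2 f) \<le> (C1 + C2) * (\<Sum>p\<in>F1 \<union> F2. p f)" if f: "f \<in> X" for f
  proof -
    have sum1: "(\<Sum>p\<in>F1. p f) \<le> (\<Sum>p\<in>F1 \<union> F2. p f)"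
      by (rule sum_mono2) (use F1 F2 nonneg f in auto)
    have sum2: "(\<Sum>p\<in>F2. p f) \<le> (\<Sum>p\<in>F1 \<union> F2. p f)"
      by (rule sum_mono2) (use F1 F2 nonneg f in auto)
    have "norm (y1 f - y2 f) \<le> norm (y1 f) + norm (y2 f)"
      by (rule norm_triangle_ineq4)
    also have "\<dots> \<le> C1 * (\<Sum>p\<in>F1. p f) + C2 * (\<Sum>p\<in>F2. p f)"
      using bound1[OF f] bound2[OF f] by (rule add_mono)
    also have "\<dots> \<le> C1 * (\<Sum>p\<in>F1 \<union> F2. p f) + C2 * (\<Sum>p\<in>F1 \<union> F2. p f)"
      using sum1 sum2 F1(3) F2(3) by (intro add_mono mult_left_mono)
    finally show ?thesis by (simp add: distrib_right)
  qed
  then show ?thesis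
    unfolding sn_cont_def using F1 F2 by (intro ballI exI[of _ "F1 \<union> F2"] exI[of _ "C1 + C2"]) auto
qed

lemma fv_dual_diff:
  assumes nonneg: "\<And>q f. q \<in> Q \<Longrightarrow> f \<in> X \<Longrightarrow> q f \<ge> 0"
    and y1: "y1 \<in> fv_dual X Q" and y2: "y2 \<in> fv_dual X Q"
  shows "(\<lambda>f. y1 f - y2 f) \<in> fv_dual X Q"
proof -
  have "sn_cont X Q {norm} (\<lambda>f. y1 f - y2 f)"
    using y1 y2 unfolding fv_dual_def by (auto intro: sn_cont_diff nonneg)
  then show ?thesis
    using y1 y2 unfolding fv_dual_def by (auto simp: algebra_simps)
qed

lemma Cauchy_sum_finite:
  fixes d :: "nat \<Rightarrow> nat \<Rightarrow> 'x" and F :: "('x \<Rightarrow> real) set"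
  assumes "finite F" and "\<And>q e. q \<in> F \<Longrightarrow> e > 0 \<Longrightarrow> \<exists>N. \<forall>m\<ge>N. \<forall>n\<ge>N. q (d m n) < e"
    and "e > 0"
  shows "\<exists>N. \<forall>m\<ge>N. \<forall>n\<ge>N. (\<Sum>q\<in>F. q (d m n)) < e"
  using assms
proof (induction F arbitrary: e rule: finite_induct)
  case empty
  then show ?case by auto
next
  case (insert q F)
  have e2: "e / 2 > 0" using insert.prems(2) by simp
  obtain N1 where N1: "\<forall>m\<ge>N1. \<forall>n\<ge>N1. q (d m n) < e / 2"
    using insert.prems(1)[OF insertI1 e2] by blast
  obtain N2 where N2: "\<forall>m\<ge>N2. \<forall>n\<ge>N2. (\<Sum>q\<in>F. q (d m n)) < e / 2"
    using insert.IH[OF insert.prems(1)[OF insertI2] e2] by blast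
  have "(\<Sum>q\<in>insert q F. q (d m n)) < e" if "m \<ge> max N1 N2" "n \<ge> max N1 N2" for m n
  proof -
    have "(\<Sum>q\<in>insert q F. q (d m n)) = q (d m n) + (\<Sum>q\<in>F. q (d m n))"
      using insert.hyps by (rule sum.insert)
    also have "\<dots> < e / 2 + e / 2"
      using N1 N2 that by (intro add_strict_mono) auto
    finally show ?thesis by simp
  qed
  then show ?case by blast
qed

lemma sn_cont_imp_sn_Cauchy:
  fixes u :: "('x \<Rightarrow> 'k::real_normed_field) \<Rightarrow> 'e::ab_group_add"
  assumes cont: "sn_cont X Q P u"
    and diff_mem: "\<And>m n. (\<lambda>x. Y m x - Y n x) \<in> X"
    and u_diff: "\<And>m n. u (\<lambda>x. Y m x - Y n x) = u (Y m) - u (Y n)"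
    and Y: "fun_sn_Cauchy Q Y"
  shows "sn_Cauchy P (\<lambda>n. u (Y n))"
  unfolding sn_Cauchy_def
proof (intro ballI allI impI)
  fix p and e :: real
  assume p: "p \<in> P" and e: "e > 0"
  have "\<exists>F C. finite F \<and> F \<subseteq> Q \<and> C \<ge> 0 \<and> (\<forall>y\<in>X. p (u y) \<le> C * (\<Sum>q\<in>F. q y))"
    using cont p unfolding sn_cont_def by (rule bspec)
  then obtain F C where F: "finite F" "F \<subseteq> Q" and C: "C \<ge> 0"
    and bound: "\<forall>y\<in>X. p (u y) \<le> C * (\<Sum>q\<in>F. q y)"
    by blast
  have Y_small: "\<exists>N. \<forall>m\<ge>N. \<forall>n\<ge>N. q (\<lambda>x. Y m x - Y n x) < \<epsilon>"
    if "q \<in> F" "\<epsilon> > 0" for q \<epsilon>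
    using Y that F(2) unfolding fun_sn_Cauchy_def by blast
  have "e / (C + 1) > 0" using e C by simp
  then obtain N where N: "\<forall>m\<ge>N. \<forall>n\<ge>N. (\<Sum>q\<in>F. q (\<lambda>x. Y m x - Y n x)) < e / (C + 1)"
    using Cauchy_sum_finite[of F "\<lambda>m n x. Y m x - Y n x", OF F(1) Y_small] by blast
  have "p (u (Y m) - u (Y n)) < e" if "m \<ge> N" "n \<ge> N" for m n
  proof -
    have "p (u (Y m) - u (Y n)) \<le> C * (\<Sum>q\<in>F. q (\<lambda>x. Y m x - Y n x))"
      using bspec[OF bound diff_mem] by (simp only: u_diff)
    also have "\<dots> \<le> C * (e / (C + 1))"
      using N that C by (intro mult_left_mono) (simp_all add: less_imp_le)
    also have "\<dots> < (C + 1) * (e / (C + 1))"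
      using e C by (intro mult_strict_right_mono) auto
    also have "\<dots> = e"
      using C by simp
    finally show ?thesis .
  qed
  then show "\<exists>N. \<forall>m\<ge>N. \<forall>n\<ge>N. p (u (Y m) - u (Y n)) < e" by blast
qed

theorem proposition4p4:
  fixes sm :: "'k::real_normed_field \<Rightarrow> 'e::ab_group_add \<Rightarrow> 'e"
    and P :: "('e \<Rightarrow> real) set"
    and AP :: "('a::metric_space \<Rightarrow> 'k) set"
    and domT :: "'m \<Rightarrow> ('a \<Rightarrow> 'k) set"
    and T :: "'m \<Rightarrow> ('a \<Rightarrow> 'k) \<Rightarrow> 'w \<Rightarrow> 'k"
    and \<omega> :: "'m \<Rightarrow> 'w set"
    and \<nu> :: "'j \<Rightarrow> 'm \<Rightarrow> 'w \<Rightarrow> real"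
    and u :: "(('a \<Rightarrow> 'k) \<Rightarrow> 'k) \<Rightarrow> 'e"
  defines "FVO \<equiv> FV AP domT T \<omega> \<nu>"
    and "Qs \<equiv> fv_seminorms T \<omega> \<nu>"
  assumes E_lcHs: "lcHs sm P"
    and E_nontrivial: "\<exists>x::'e. x \<noteq> 0"
    and \<omega>_ne: "\<And>m. \<omega> m \<noteq> {}"
    and \<nu>_nonneg: "\<And>j m x. \<nu> j m x \<ge> 0"
    and \<nu>_pos: "\<And>m x. x \<in> \<omega> m \<Longrightarrow> \<exists>j. \<nu> j m x > 0"
    and AP_sub: "lin_subspace AP"
    and domT_sub: "\<And>m. lin_subspace (domT m)"
    and T_lin: "\<And>m. lin_map_on (domT m) (T m)"
    and dom_hausdorff: "\<And>f. f \<in> FVO \<Longrightarrow> f \<noteq> (\<lambda>x. 0) \<Longrightarrow> \<exists>j m. fv_seminorm T \<omega> \<nu> j m f \<noteq> 0"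
    and dom_directed: "\<And>j1 m1 j2 m2. \<exists>j m C. \<forall>f\<in>FVO.
          max (fv_seminorm T \<omega> \<nu> j1 m1 f) (fv_seminorm T \<omega> \<nu> j2 m2 f) \<le> C * fv_seminorm T \<omega> \<nu> j m f"
    and dom_delta: "\<And>x. point_eval FVO x \<in> fv_dual FVO Qs"
    and FV_CC: "\<And>f X. f \<in> FVO \<Longrightarrow> Cauchy X \<Longrightarrow> Cauchy (\<lambda>n. f (X n))"
    and delta_CC: "\<And>X. Cauchy X \<Longrightarrow> fun_sn_Cauchy (kappa_seminorms FVO Qs) (\<lambda>n. point_eval FVO (X n))"
    and u_add: "\<And>y1 y2. y1 \<in> fv_dual FVO Qs \<Longrightarrow> y2 \<in> fv_dual FVO Qs \<Longrightarrow>
          u (\<lambda>f. y1 f + y2 f) = u y1 + u y2"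
    and u_scale: "\<And>c y. y \<in> fv_dual FVO Qs \<Longrightarrow> u (\<lambda>f. c * y f) = sm c (u y)"
    and u_cont: "sn_cont (fv_dual FVO Qs) (kappa_seminorms FVO Qs) P u"
  shows "\<forall>X. Cauchy X \<longrightarrow> sn_Cauchy P (\<lambda>n. u (point_eval FVO (X n)))"
proof (intro allI impI)
  fix X :: "nat \<Rightarrow> 'a"
  assume X: "Cauchy X"
  let ?\<delta> = "\<lambda>n. point_eval FVO (X n)"
  have Qs_nonneg: "q f \<ge> 0" if q: "q \<in> Qs" and f: "f \<in> FVO" for q f
  proof -
    obtain j m where "q = fv_seminorm T \<omega> \<nu> j m"
      using q unfolding Qs_def fv_seminorms_def by blast
    then show ?thesis
      using fv_seminorm_nonneg[OF \<omega>_ne \<nu>_nonneg f[unfolded FVO_def]] by simp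
  qed
  have diff_mem: "(\<lambda>f. ?\<delta> m f - ?\<delta> n f) \<in> fv_dual FVO Qs" for m n
    by (rule fv_dual_diff[OF _ dom_delta dom_delta]) (rule Qs_nonneg)
  have u_diff: "u (\<lambda>f. ?\<delta> m f - ?\<delta> n f) = u (?\<delta> m) - u (?\<delta> n)" for m n
  proof -
    have "u (?\<delta> m) = u (\<lambda>f. (?\<delta> m f - ?\<delta> n f) + ?\<delta> n f)"
      by simp
    also have "\<dots> = u (\<lambda>f. ?\<delta> m f - ?\<delta> n f) + u (?\<delta> n)"
      by (rule u_add[OF diff_mem dom_delta])
    finally show ?thesis
      by (simp add: eq_diff_eq)
  qed
  show "sn_Cauchy P (\<lambda>n. u (?\<delta> n))"
    using sn_cont_imp_sn_Cauchy[OF u_cont diff_mem u_diff delta_CC[OF X]] .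
qed

end
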